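(* Let $(X,Y,\tilde Y)$ be jointly distributed with $X\in\mathcal{X}$ and $Y,\tilde Y\in\{0,1\}$; let $Q$ be the distribution of $(X,Y)$ and $P$ the distribution of $(X,\tilde Y)$, so $P_X=Q_X$. Let $\eta_Q(x)=\Pr(Y=1\mid X=x)$, $\eta_P(x)=\Pr(\tilde Y=1\mid X=x)$ and $\rho_i(x)=\Pr(\tilde Y\ne i\mid Y=i,X=x)$ for $i\in\{0,1\}$. Suppose $\rho_1\equiv0$ and there is a strictly increasing function $\psi$ with $\rho_0(x)=\psi(\eta_Q(x))$ for all $x$. Then there exists a strictly increasing function $\phi$ such that $\eta_P(x)=\phi(\eta_Q(x))$ for all $x$. *)

theory Defs
  imports "HOL-Probability.Probability"
begin

text \<open>f is a version of the conditional probability x \<mapsto> Pr(E | X = x):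
  a measurable [0,1]-valued function on the feature space N with
  Pr(X \<in> A \<and> E) = \<integral>_A f dP_X for all measurable A.\<close>
definition is_cond_prob ::
  "'a measure \<Rightarrow> ('a \<Rightarrow> 'b) \<Rightarrow> 'b measure \<Rightarrow> ('a \<Rightarrow> bool) \<Rightarrow> ('b \<Rightarrow> real) \<Rightarrow> bool" where
  "is_cond_prob M X N E f \<longleftrightarrow>
     f \<in> borel_measurable N \<and> (\<forall>x. 0 \<le> f x \<and> f x \<le> 1) \<and>
     (\<forall>A\<in>sets N. measure M {\<omega>\<in>space M. X \<omega> \<in> A \<and> E \<omega>}
                   = (\<integral>x\<in>A. f x \<partial>(distr M N X)))"

text \<open>f is a version of x \<mapsto> Pr(E | B, X = x), where g is a version of
  x \<mapsto> Pr(B | X = x):  Pr(X \<in> A \<and> B \<and> E) = \<integral>_A f g dP_X.\<close>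
definition is_cond_prob2 ::
  "'a measure \<Rightarrow> ('a \<Rightarrow> 'b) \<Rightarrow> 'b measure \<Rightarrow> ('a \<Rightarrow> bool) \<Rightarrow> ('a \<Rightarrow> bool)
     \<Rightarrow> ('b \<Rightarrow> real) \<Rightarrow> ('b \<Rightarrow> real) \<Rightarrow> bool" where
  "is_cond_prob2 M X N B E g f \<longleftrightarrow>
     f \<in> borel_measurable N \<and> (\<forall>x. 0 \<le> f x \<and> f x \<le> 1) \<and>
     (\<forall>A\<in>sets N. measure M {\<omega>\<in>space M. X \<omega> \<in> A \<and> B \<omega> \<and> E \<omega>}
                   = (\<integral>x\<in>A. f x * g x \<partial>(distr M N X)))"

end

theory Submission
  imports Defs
begin

text \<open>Since \<open>\<rho>\<^sub>1 = 0\<close>, the noisy label is 1 exactly when either \<open>Y = 1\<close>, or \<open>Y = 0\<close> and the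
  label was flipped. Adding the two conditional probabilities gives
  \<open>\<eta>\<^sub>P = \<eta>\<^sub>Q + (1 - \<eta>\<^sub>Q) \<psi>(\<eta>\<^sub>Q)\<close> almost everywhere, by uniqueness of conditional
  probabilities, and \<open>t \<mapsto> t + (1 - t) \<psi>(t)\<close> is strictly increasing as long as \<open>\<psi> \<le> 1\<close>.\<close>

definition noisy_link :: "(real \<Rightarrow> real) \<Rightarrow> real \<Rightarrow> real" where
  "noisy_link psi t = (if psi t \<le> 1 then t + (1 - t) * psi t else t + 1)"

text \<open>The second branch is never used at values of \<open>\<eta>\<^sub>Q\<close>, where \<open>\<psi>\<close> is a probability;
  it only repairs strict monotonicity above them, where \<open>\<psi>\<close> may exceed 1.\<close>

lemma strict_mono_on_noisy_link:
  assumes "strict_mono_on {0..1} psi"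
  shows "strict_mono_on {0..1} (noisy_link psi)"
proof (rule strict_mono_onI)
  fix s t :: real
  assume s: "s \<in> {0..1}" and t: "t \<in> {0..1}" and "s < t"
  then have psi_less: "psi s < psi t"
    using assms by (simp add: strict_mono_on_def)
  consider "psi t \<le> 1" | "psi s \<le> 1" "1 < psi t" | "1 < psi s"
    using psi_less by linarith
  then show "noisy_link psi s < noisy_link psi t"
  proof cases
    case 1
    have "t + (1 - t) * psi t - (s + (1 - s) * psi s)
          = (t - s) * (1 - psi s) + (1 - t) * (psi t - psi s)"
      by (simp add: algebra_simps)
    moreover have "(t - s) * (1 - psi s) > 0"
      using \<open>s < t\<close> 1 psi_less by simp
    moreover have "(1 - t) * (psi t - psi s) \<ge> 0"
      using t psi_less by simp
    ultimately show ?thesis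
      using 1 psi_less by (simp add: noisy_link_def)
  next
    case 2
    have "(1 - s) * psi s \<le> 1 - s"
      using s 2 mult_left_mono[of "psi s" 1 "1 - s"] by simp
    then show ?thesis
      using s 2 \<open>s < t\<close> by (simp add: noisy_link_def)
  next
    case 3
    then show ?thesis
      using psi_less \<open>s < t\<close> by (simp add: noisy_link_def)
  qed
qed

lemma is_cond_prob_cong:
  assumes "\<And>\<omega>. \<omega> \<in> space M \<Longrightarrow> E \<omega> = E' \<omega>"
  shows "is_cond_prob M X N E f = is_cond_prob M X N E' f"
proof -
  have "{\<omega>\<in>space M. X \<omega> \<in> A \<and> E \<omega>} = {\<omega>\<in>space M. X \<omega> \<in> A \<and> E' \<omega>}" for A
    using assms by blast
  then show ?thesis
    by (simp add: is_cond_prob_def)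
qed

lemma is_cond_prob2_imp_is_cond_prob_conj:
  assumes "is_cond_prob2 M X N B E g f"
    and "g \<in> borel_measurable N" and "\<forall>x. 0 \<le> g x \<and> g x \<le> 1"
  shows "is_cond_prob M X N (\<lambda>\<omega>. B \<omega> \<and> E \<omega>) (\<lambda>x. f x * g x)"
  using assms by (auto simp: is_cond_prob_def is_cond_prob2_def mult_le_one)

locale random_feature = prob_space M for M :: "'a measure" +
  fixes N :: "'b measure" and X :: "'a \<Rightarrow> 'b"
  assumes X_measurable [measurable]: "X \<in> measurable M N"
begin

lemma integrable_distr_bounded:
  fixes f :: "'b \<Rightarrow> real"
  assumes [measurable]: "f \<in> borel_measurable N" and "\<And>x. \<bar>f x\<bar> \<le> c"
  shows "integrable (distr M N X) f"
proof -
  interpret PX: prob_space "distr M N X"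
    by (rule prob_space_distr) simp
  show ?thesis
    by (rule PX.integrable_const_bound[of _ c]) (use assms in auto)
qed

lemma is_cond_prob_integrable_on:
  assumes "is_cond_prob M X N E f" and "A \<in> sets N"
  shows "set_integrable (distr M N X) A f"
  unfolding set_integrable_def
proof (rule integrable_mult_indicator)
  show "A \<in> sets (distr M N X)"
    using assms(2) by simp
  show "integrable (distr M N X) f"
    using assms(1) by (intro integrable_distr_bounded[of _ 1]) (auto simp: is_cond_prob_def)
qed

lemma is_cond_prob_AE_unique:
  assumes f: "is_cond_prob M X N E f" and g: "is_cond_prob M X N E g"
  shows "AE x in distr M N X. f x = g x"
proof (rule density_unique_real)
  show "integrable (distr M N X) f" "integrable (distr M N X) g"
    using f g by (auto intro!: integrable_distr_bounded[of _ 1] simp: is_cond_prob_def)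
  show "(\<integral>x\<in>A. f x \<partial>distr M N X) = (\<integral>x\<in>A. g x \<partial>distr M N X)" if "A \<in> sets (distr M N X)" for A
    using f g that by (simp add: is_cond_prob_def)
qed

lemma is_cond_prob_disj:
  assumes f: "is_cond_prob M X N E f" and g: "is_cond_prob M X N F g"
    and [measurable]: "Measurable.pred M E" "Measurable.pred M F"
    and disjoint: "\<And>\<omega>. \<omega> \<in> space M \<Longrightarrow> \<not> (E \<omega> \<and> F \<omega>)"
    and bounded: "\<And>x. f x + g x \<le> 1"
  shows "is_cond_prob M X N (\<lambda>\<omega>. E \<omega> \<or> F \<omega>) (\<lambda>x. f x + g x)"
proof -
  have "measure M {\<omega>\<in>space M. X \<omega> \<in> A \<and> (E \<omega> \<or> F \<omega>)}
        = (\<integral>x\<in>A. f x + g x \<partial>distr M N X)" if [measurable]: "A \<in> sets N" for A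
  proof -
    have "{\<omega>\<in>space M. X \<omega> \<in> A \<and> (E \<omega> \<or> F \<omega>)}
          = {\<omega>\<in>space M. X \<omega> \<in> A \<and> E \<omega>} \<union> {\<omega>\<in>space M. X \<omega> \<in> A \<and> F \<omega>}"
      by blast
    also have "measure M \<dots>
          = measure M {\<omega>\<in>space M. X \<omega> \<in> A \<and> E \<omega>} + measure M {\<omega>\<in>space M. X \<omega> \<in> A \<and> F \<omega>}"
      using disjoint by (intro finite_measure_Union) auto
    also have "\<dots> = (\<integral>x\<in>A. f x \<partial>distr M N X) + (\<integral>x\<in>A. g x \<partial>distr M N X)"
      using f g by (simp add: is_cond_prob_def)
    also have "\<dots> = (\<integral>x\<in>A. f x + g x \<partial>distr M N X)"
      using f g by (intro set_integral_add(2)[symmetric] is_cond_prob_integrable_on) auto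
    finally show ?thesis .
  qed
  with f g bounded show ?thesis
    by (auto simp: is_cond_prob_def)
qed

lemma is_cond_prob_conj_not_null:
  assumes f: "is_cond_prob M X N E f" and null: "is_cond_prob2 M X N E F f (\<lambda>_. 0)"
    and [measurable]: "Measurable.pred M E" "Measurable.pred M F"
  shows "is_cond_prob M X N (\<lambda>\<omega>. E \<omega> \<and> \<not> F \<omega>) f"
proof -
  have "measure M {\<omega>\<in>space M. X \<omega> \<in> A \<and> E \<omega> \<and> \<not> F \<omega>}
        = measure M {\<omega>\<in>space M. X \<omega> \<in> A \<and> E \<omega>}" if [measurable]: "A \<in> sets N" for A
  proof -
    have "{\<omega>\<in>space M. X \<omega> \<in> A \<and> E \<omega> \<and> \<not> F \<omega>}
          = {\<omega>\<in>space M. X \<omega> \<in> A \<and> E \<omega>} - {\<omega>\<in>space M. X \<omega> \<in> A \<and> E \<omega> \<and> F \<omega>}"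
      by blast
    also have "measure M \<dots>
          = measure M {\<omega>\<in>space M. X \<omega> \<in> A \<and> E \<omega>} - measure M {\<omega>\<in>space M. X \<omega> \<in> A \<and> E \<omega> \<and> F \<omega>}"
      by (intro finite_measure_Diff) auto
    finally show ?thesis
      using null by (simp add: is_cond_prob2_def)
  qed
  with f show ?thesis
    by (simp add: is_cond_prob_def)
qed

end

theorem lemma1:
  fixes M :: "'a measure" and N :: "'b measure"
    and X :: "'a \<Rightarrow> 'b" and Y Yt :: "'a \<Rightarrow> nat"
    and etaQ etaP rho0 rho1 :: "'b \<Rightarrow> real"
  fixes psi :: "real \<Rightarrow> real"
  assumes "prob_space M"
    and "X \<in> measurable M N"
    and "Y \<in> measurable M (count_space UNIV)"
    and "Yt \<in> measurable M (count_space UNIV)"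
    and "\<forall>\<omega>\<in>space M. Y \<omega> \<in> {0, 1} \<and> Yt \<omega> \<in> {0, 1}"
    and "is_cond_prob M X N (\<lambda>\<omega>. Y \<omega> = 1) etaQ"
    and "is_cond_prob M X N (\<lambda>\<omega>. Yt \<omega> = 1) etaP"
    and "is_cond_prob2 M X N (\<lambda>\<omega>. Y \<omega> = 0) (\<lambda>\<omega>. Yt \<omega> \<noteq> 0) (\<lambda>x. 1 - etaQ x) rho0"
    and "is_cond_prob2 M X N (\<lambda>\<omega>. Y \<omega> = 1) (\<lambda>\<omega>. Yt \<omega> \<noteq> 1) etaQ rho1"
    and "\<forall>x. rho1 x = 0"
    and "strict_mono_on {0..1} psi"
    and "\<forall>x. rho0 x = psi (etaQ x)"
  shows "\<exists>phi :: real \<Rightarrow> real. strict_mono_on {0..1} phi \<and>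
           (AE x in distr M N X. etaP x = phi (etaQ x))"
proof -
  interpret random_feature M N X
    using assms(1,2) by (simp add: random_feature_def random_feature_axioms_def)
  have [measurable]: "Y \<in> measurable M (count_space UNIV)" "Yt \<in> measurable M (count_space UNIV)"
    using assms(3,4) by auto
  have etaQ: "etaQ \<in> borel_measurable N" "\<forall>x. 0 \<le> etaQ x \<and> etaQ x \<le> 1"
    using assms(6) by (auto simp: is_cond_prob_def)
  have rho0_le_1: "rho0 x \<le> 1" for x
    using assms(8) by (simp add: is_cond_prob2_def)
  have flipped: "is_cond_prob M X N (\<lambda>\<omega>. Y \<omega> = 0 \<and> Yt \<omega> \<noteq> 0) (\<lambda>x. rho0 x * (1 - etaQ x))"
    using assms(8) etaQ by (intro is_cond_prob2_imp_is_cond_prob_conj) auto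
  have "rho1 = (\<lambda>_. 0)"
    using assms(10) by auto
  then have kept: "is_cond_prob M X N (\<lambda>\<omega>. Y \<omega> = 1 \<and> \<not> Yt \<omega> \<noteq> 1) etaQ"
    using assms(6,9) by (intro is_cond_prob_conj_not_null) auto
  have "is_cond_prob M X N (\<lambda>\<omega>. (Y \<omega> = 0 \<and> Yt \<omega> \<noteq> 0) \<or> (Y \<omega> = 1 \<and> \<not> Yt \<omega> \<noteq> 1))
          (\<lambda>x. rho0 x * (1 - etaQ x) + etaQ x)"
  proof (rule is_cond_prob_disj[OF flipped kept])
    show "rho0 x * (1 - etaQ x) + etaQ x \<le> 1" for x
      using etaQ rho0_le_1[of x] mult_right_mono[of "rho0 x" 1 "1 - etaQ x"] by simp
  qed auto
  then have "is_cond_prob M X N (\<lambda>\<omega>. Yt \<omega> = 1) (\<lambda>x. noisy_link psi (etaQ x))"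
    using assms(5,12) rho0_le_1 by (subst (asm) is_cond_prob_cong[of _ _ "\<lambda>\<omega>. Yt \<omega> = 1"])
      (auto simp: noisy_link_def algebra_simps)
  then have "AE x in distr M N X. etaP x = noisy_link psi (etaQ x)"
    using assms(7) by (rule is_cond_prob_AE_unique[rotated])
  then show ?thesis
    using strict_mono_on_noisy_link[OF assms(11)] by blast
qed

end
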